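(* Let $G$ be a connected finite graph that is not a Gallai tree and let $\mathcal{L}$ be a degree-list assignment for $G$. Suppose that $g$ is a partial proper $\mathcal{L}$-coloring of $G$. Then $G$ has a proper $\mathcal{L}$-coloring $f$ such that $|f^{-1}(\alpha)|\geq |g^{-1}(\alpha)|$ for every $\alpha\in\bigcup_{x\in V(G)}\mathcal{L}(x)$.
   Context: A list assignment for $G$ assigns to each vertex $x$ a set $\mathcal{L}(x)$; it is a degree-list assignment if $|\mathcal{L}(x)|\geq\deg_G(x)$ for all $x$. A partial $\mathcal{L}$-coloring is a function $g$ with $\mathrm{dom}(g)\subseteq V(G)$ and $g(x)\in\mathcal{L}(x)$ for all $x\in\mathrm{dom}(g)$; an $\mathcal{L}$-coloring has domain $V(G)$; it is proper if adjacent vertices in its domain receive different colors. A cut-vertex of a connected graph $G$ is a vertex $x$ such that $G-x$ is disconnected; a block is a maximal subgraph without a cut-vertex. A connected graph is a Gallai tree if every block is a clique or an odd cycle. *)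

theory Defs
  imports Main
begin

definition graph :: "'a set \<Rightarrow> 'a set set \<Rightarrow> bool" where
  "graph V E \<longleftrightarrow> finite V \<and> (\<forall>e\<in>E. card e = 2 \<and> e \<subseteq> V)"

definition degree :: "'a set \<Rightarrow> 'a set set \<Rightarrow> 'a \<Rightarrow> nat" where
  "degree V E x = card {y \<in> V. {x, y} \<in> E}"

definition connected_graph :: "'a set \<Rightarrow> 'a set set \<Rightarrow> bool" where
  "connected_graph V E \<longleftrightarrow> V \<noteq> {} \<and>
     (\<forall>x\<in>V. \<forall>y\<in>V. (x, y) \<in> {(u, v). u \<in> V \<and> v \<in> V \<and> {u, v} \<in> E}\<^sup>*)"

definition del_vertex_edges :: "'a set set \<Rightarrow> 'a \<Rightarrow> 'a set set" where
  "del_vertex_edges E x = {e \<in> E. x \<notin> e}"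

text \<open>A cut-vertex of a connected graph: removing it disconnects the graph
  (the empty graph is not regarded as disconnected).\<close>
definition cut_vertex :: "'a set \<Rightarrow> 'a set set \<Rightarrow> 'a \<Rightarrow> bool" where
  "cut_vertex V E x \<longleftrightarrow> x \<in> V \<and> V - {x} \<noteq> {} \<and>
     \<not> connected_graph (V - {x}) (del_vertex_edges E x)"

definition subgraph :: "'a set \<Rightarrow> 'a set set \<Rightarrow> 'a set \<Rightarrow> 'a set set \<Rightarrow> bool" where
  "subgraph W F V E \<longleftrightarrow> W \<subseteq> V \<and> F \<subseteq> E \<and> (\<forall>e\<in>F. e \<subseteq> W)"

definition nonseparable :: "'a set \<Rightarrow> 'a set set \<Rightarrow> bool" where
  "nonseparable W F \<longleftrightarrow> connected_graph W F \<and> (\<forall>x. \<not> cut_vertex W F x)"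

definition block :: "'a set \<Rightarrow> 'a set set \<Rightarrow> 'a set \<Rightarrow> 'a set set \<Rightarrow> bool" where
  "block V E W F \<longleftrightarrow> subgraph W F V E \<and> nonseparable W F \<and>
     (\<forall>W' F'. subgraph W' F' V E \<and> nonseparable W' F' \<and> W \<subseteq> W' \<and> F \<subseteq> F'
        \<longrightarrow> W' = W \<and> F' = F)"

definition is_clique :: "'a set \<Rightarrow> 'a set set \<Rightarrow> bool" where
  "is_clique W F \<longleftrightarrow> (\<forall>x\<in>W. \<forall>y\<in>W. x \<noteq> y \<longrightarrow> {x, y} \<in> F)"

definition is_odd_cycle :: "'a set \<Rightarrow> 'a set set \<Rightarrow> bool" where
  "is_odd_cycle W F \<longleftrightarrow> connected_graph W F \<and> card W \<ge> 3 \<and> odd (card W) \<and>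
     (\<forall>x\<in>W. degree W F x = 2)"

definition gallai_tree :: "'a set \<Rightarrow> 'a set set \<Rightarrow> bool" where
  "gallai_tree V E \<longleftrightarrow> connected_graph V E \<and>
     (\<forall>W F. block V E W F \<longrightarrow> is_clique W F \<or> is_odd_cycle W F)"

definition degree_list_assignment :: "'a set \<Rightarrow> 'a set set \<Rightarrow> ('a \<Rightarrow> 'c set) \<Rightarrow> bool" where
  "degree_list_assignment V E L \<longleftrightarrow>
     (\<forall>x\<in>V. infinite (L x) \<or> degree V E x \<le> card (L x))"

definition proper_partial_L_coloring ::
  "'a set \<Rightarrow> 'a set set \<Rightarrow> ('a \<Rightarrow> 'c set) \<Rightarrow> ('a \<Rightarrow> 'c option) \<Rightarrow> bool" where
  "proper_partial_L_coloring V E L g \<longleftrightarrow> dom g \<subseteq> V \<and>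
     (\<forall>x c. g x = Some c \<longrightarrow> c \<in> L x) \<and>
     (\<forall>x y. {x, y} \<in> E \<and> x \<in> dom g \<and> y \<in> dom g \<longrightarrow> g x \<noteq> g y)"

definition proper_L_coloring ::
  "'a set \<Rightarrow> 'a set set \<Rightarrow> ('a \<Rightarrow> 'c set) \<Rightarrow> ('a \<Rightarrow> 'c) \<Rightarrow> bool" where
  "proper_L_coloring V E L f \<longleftrightarrow> (\<forall>x\<in>V. f x \<in> L x) \<and>
     (\<forall>x y. {x, y} \<in> E \<and> x \<in> V \<and> y \<in> V \<longrightarrow> f x \<noteq> f y)"

end

theory Submission
  imports Defs
begin

text \<open>
  A block witnessing that G is not a Gallai tree is a nonseparable induced subgraph W that is
  neither a clique nor an odd cycle. The vertices outside W are coloured one at a time, always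
  one whose deletion leaves G connected.
  A vertex v gets its precolour, or a colour of its list that is precoloured on at most one
  neighbour; deleting that colour from the neighbours' lists keeps a degree-list assignment, and
  the at most one precoloured vertex lost is made up for by v.

  This leaves the case that G itself is such a W and all its proper nonseparable induced
  subgraphs are cliques or odd cycles. If G had no colouring, then G - z could still be coloured
  for an uncoloured z, because a neighbour of z has slack there; moving the uncoloured hole along
  edges shows that all lists are equal and G is regular of degree k = |L|. For k = 2, counting the
  edges between the two colour classes shows that G is an odd cycle; for k \<ge> 3, splitting off a
  minimal ear from a maximal proper nonseparable subgraph exposes a vertex of degree at most 2.
\<close>

section \<open>Walks and connectivity\<close>

definition adj :: "'a set set \<Rightarrow> 'a set \<Rightarrow> ('a \<times> 'a) set" where
  "adj E X = {(u, v). u \<in> X \<and> v \<in> X \<and> {u, v} \<in> E}"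

lemma connected_graph_iff:
  "connected_graph X E \<longleftrightarrow> X \<noteq> {} \<and> (\<forall>x\<in>X. \<forall>y\<in>X. (x, y) \<in> (adj E X)\<^sup>*)"
  unfolding connected_graph_def adj_def ..

lemma adjI: "u \<in> X \<Longrightarrow> v \<in> X \<Longrightarrow> {u, v} \<in> E \<Longrightarrow> (u, v) \<in> adj E X"
  unfolding adj_def by simp

lemma adjD: "(u, v) \<in> adj E X \<Longrightarrow> u \<in> X \<and> v \<in> X \<and> {u, v} \<in> E"
  unfolding adj_def by simp

lemma converse_adj [simp]: "(adj E X)\<inverse> = adj E X"
  unfolding adj_def by (auto simp: insert_commute)

lemma rtrancl_adj_sym: "(u, v) \<in> (adj E X)\<^sup>* \<Longrightarrow> (v, u) \<in> (adj E X)\<^sup>*"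
  using rtrancl_converseI[of u v "adj E X"] by simp

lemma rtrancl_adj_mono: "X \<subseteq> Y \<Longrightarrow> (u, v) \<in> (adj E X)\<^sup>* \<Longrightarrow> (u, v) \<in> (adj E Y)\<^sup>*"
  using rtrancl_mono[of "adj E X" "adj E Y"] unfolding adj_def by blast

lemma rtrancl_adj_closed: "(y, q) \<in> (adj E S)\<^sup>* \<Longrightarrow> y \<in> S \<Longrightarrow> q \<in> S"
  by (induction rule: rtrancl_induct) (auto dest: adjD)

lemma connected_graphI:
  assumes "r \<in> X" and "\<And>y. y \<in> X \<Longrightarrow> (r, y) \<in> (adj E X)\<^sup>*"
  shows "connected_graph X E"
  unfolding connected_graph_iff
  using assms by (blast intro: rtrancl_trans rtrancl_adj_sym)

lemma connected_graphD:
  "connected_graph X E \<Longrightarrow> x \<in> X \<Longrightarrow> y \<in> X \<Longrightarrow> (x, y) \<in> (adj E X)\<^sup>*"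
  unfolding connected_graph_iff by blast

lemma connected_graph_singleton: "connected_graph {x} E"
  unfolding connected_graph_iff by simp

lemma connected_graph_Un:
  assumes "connected_graph A E" "connected_graph B E" "a \<in> A" "b \<in> B" "{a, b} \<in> E"
  shows "connected_graph (A \<union> B) E"
proof (rule connected_graphI)
  show "a \<in> A \<union> B" using assms(3) by simp
  have ab: "(a, b) \<in> adj E (A \<union> B)" using assms(3-5) by (simp add: adjI)
  fix y assume "y \<in> A \<union> B"
  then show "(a, y) \<in> (adj E (A \<union> B))\<^sup>*"
  proof
    assume "y \<in> A"
    then show ?thesis using connected_graphD[OF assms(1,3)] rtrancl_adj_mono[of A "A \<union> B"] by blast
  next
    assume "y \<in> B"
    then have "(b, y) \<in> (adj E (A \<union> B))\<^sup>*"
      using connected_graphD[OF assms(2,4)] rtrancl_adj_mono[of B "A \<union> B"] by blast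
    with ab show ?thesis by (rule converse_rtrancl_into_rtrancl)
  qed
qed

lemma connected_graph_insert:
  assumes "connected_graph R E" "r \<in> R" "{x, r} \<in> E"
  shows "connected_graph (insert x R) E"
  using connected_graph_Un[OF connected_graph_singleton assms(1) singletonI assms(2,3)] by simp

lemma connected_graph_has_neighbor:
  assumes "connected_graph X E" "x \<in> X" "y \<in> X" "x \<noteq> y"
  obtains z where "z \<in> X" "{x, z} \<in> E"
proof -
  have "(x, y) \<in> (adj E X)\<^sup>*" using connected_graphD[OF assms(1-3)] .
  then obtain z where "(x, z) \<in> adj E X"
    using assms(4) by (cases rule: converse_rtranclE) auto
  with that show thesis unfolding adj_def by blast
qed

lemma degree_pos_if_edge: "finite X \<Longrightarrow> v \<in> X \<Longrightarrow> {x, v} \<in> E \<Longrightarrow> 0 < degree X E x"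
  unfolding degree_def by (auto simp: card_gt_0_iff)

lemma degree_pos_if_connected:
  assumes "finite X" "connected_graph X E" "x \<in> X" "y \<in> X" "x \<noteq> y"
  shows "0 < degree X E x"
proof -
  obtain z where "z \<in> X" "{x, z} \<in> E"
    using connected_graph_has_neighbor[OF assms(2-5)] .
  then show ?thesis by (rule degree_pos_if_edge[OF assms(1)])
qed

lemma rtrancl_adj_exit_edge:
  assumes "(a, b) \<in> (adj E X)\<^sup>*" "a \<in> R" "b \<notin> R"
  obtains p q where "p \<in> R" "q \<notin> R" "(p, q) \<in> adj E X"
  using assms by (induction rule: rtrancl_induct) auto

lemma connected_graph_delete_vertex_outside:
  assumes "finite X" "connected_graph X E" "R \<subseteq> X" "connected_graph R E" "R \<noteq> X"
  shows "\<exists>z \<in> X - R. connected_graph (X - {z}) E"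
  using assms
proof (induction "card (X - R)" arbitrary: R rule: less_induct)
  case less
  obtain r where r: "r \<in> R" using less.prems(4) unfolding connected_graph_iff by auto
  obtain y where y: "y \<in> X" "y \<notin> R" using less.prems(3,5) by auto
  obtain p q where pq: "p \<in> R" "q \<notin> R" "(p, q) \<in> adj E X"
    using rtrancl_adj_exit_edge[OF connected_graphD[OF less.prems(2)] r y(2)] less.prems(3) r y(1)
    by blast
  have q: "q \<in> X" "{q, p} \<in> E" using adjD[OF pq(3)] by (auto simp: insert_commute)
  have qR: "connected_graph (insert q R) E"
    using connected_graph_insert[OF less.prems(4) pq(1) q(2)] .
  show ?case
  proof (cases "insert q R = X")
    case True
    then have "X - {q} = R" using pq(2) by auto
    then show ?thesis using less.prems(4) q(1) pq(2) by auto
  next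
    case False
    have "card (X - insert q R) < card (X - R)"
      using less.prems(1) q(1) pq(2) by (intro psubset_card_mono) auto
    from less.hyps[OF this less.prems(1,2) _ qR False] less.prems(3) q(1)
    show ?thesis by auto
  qed
qed

lemma connected_graph_delete_other_vertex:
  assumes "finite X" "connected_graph X E" "r \<in> X" "X \<noteq> {r}"
  obtains z where "z \<in> X" "z \<noteq> r" "connected_graph (X - {z}) E"
  using connected_graph_delete_vertex_outside[OF assms(1,2) _ connected_graph_singleton] assms(3,4)
  by blast

lemma connected_graph_cong:
  "(\<And>u v. u \<in> Y \<Longrightarrow> v \<in> Y \<Longrightarrow> {u, v} \<in> E \<longleftrightarrow> {u, v} \<in> F) \<Longrightarrow>
     connected_graph Y E \<longleftrightarrow> connected_graph Y F"
  unfolding connected_graph_iff adj_def by (simp cong: conj_cong)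

lemma connected_graph_mono_edges:
  assumes "connected_graph Y E" "E \<subseteq> F"
  shows "connected_graph Y F"
proof -
  have "adj E Y \<subseteq> adj F Y" using assms(2) unfolding adj_def by auto
  then show ?thesis using assms(1) rtrancl_mono unfolding connected_graph_iff by blast
qed

lemma connected_graph_reachable:
  assumes "y \<in> Y"
  shows "connected_graph {q \<in> Y. (y, q) \<in> (adj E Y)\<^sup>*} E" (is "connected_graph ?C E")
proof (rule connected_graphI)
  show "y \<in> ?C" using assms by simp
  fix q assume "q \<in> ?C"
  then have "(y, q) \<in> (adj E Y)\<^sup>*" by simp
  then show "(y, q) \<in> (adj E ?C)\<^sup>*"
  proof (induction rule: rtrancl_induct)
    case (step t t')
    then have "(t, t') \<in> adj E ?C"
      using rtrancl_into_rtrancl[OF step(1,2)] adjD[OF step(2)] unfolding adj_def by auto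
    with step(3) show ?case by (rule rtrancl_into_rtrancl)
  qed simp
qed

text \<open>Every component of P - {x} is joined to x, so whole components Q of P - {x} can be
  removed without disconnecting the rest.\<close>

lemma connected_graph_Diff_closed:
  assumes P: "connected_graph P E" and x: "x \<in> P" and Q: "Q \<subseteq> P - {x}"
    and closed: "\<And>t t'. t \<in> P - {x} - Q \<Longrightarrow> t' \<in> Q \<Longrightarrow> {t, t'} \<notin> E"
  shows "connected_graph (P - Q) E"
proof (rule connected_graphI)
  show "x \<in> P - Q" using x Q by auto
  let ?A = "adj E (P - Q)"
  fix q assume q: "q \<in> P - Q"
  have "(q, t) \<in> ?A\<^sup>* \<and> t \<in> P - Q \<or> (q, x) \<in> ?A\<^sup>*" if "(q, t) \<in> (adj E P)\<^sup>*" for t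
    using that
  proof (induction rule: rtrancl_induct)
    case (step t t')
    have t': "t \<in> P" "t' \<in> P" "{t, t'} \<in> E" using adjD[OF step(2)] by auto
    show ?case
    proof (cases "(q, x) \<in> ?A\<^sup>* \<or> t = x")
      case False
      then have t: "(q, t) \<in> ?A\<^sup>*" "t \<in> P - Q" using step(3) by auto
      then have "t' \<notin> Q" using closed t' False by blast
      then have "(t, t') \<in> ?A" using t t' by (simp add: adjI)
      then show ?thesis using t \<open>t' \<notin> Q\<close> t' by (meson DiffI rtrancl_into_rtrancl)
    qed (use step(3) in auto)
  qed (use q in simp)
  from this[OF connected_graphD[OF P _ x]] q have "(q, x) \<in> ?A\<^sup>*" by blast
  then show "(x, q) \<in> ?A\<^sup>*" by (rule rtrancl_adj_sym)
qed

section \<open>Nonseparable sets and ears\<close>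

lemma nonseparable_iff:
  "nonseparable X E \<longleftrightarrow>
     connected_graph X E \<and> (\<forall>x\<in>X. X - {x} \<noteq> {} \<longrightarrow> connected_graph (X - {x}) E)"
proof -
  have "connected_graph (X - {x}) (del_vertex_edges E x) \<longleftrightarrow> connected_graph (X - {x}) E" for x
    by (rule connected_graph_cong) (auto simp: del_vertex_edges_def)
  then show ?thesis unfolding nonseparable_def cut_vertex_def by blast
qed

lemma nonseparable_connected: "nonseparable X E \<Longrightarrow> connected_graph X E"
  unfolding nonseparable_iff by blast

lemma nonseparable_delete:
  "nonseparable X E \<Longrightarrow> x \<in> X \<Longrightarrow> X - {x} \<noteq> {} \<Longrightarrow> connected_graph (X - {x}) E"
  unfolding nonseparable_iff by blast

lemma nonseparable_edge:
  assumes "{a, b} \<in> E"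
  shows "nonseparable {a, b} E"
proof -
  have "connected_graph {a, b} E"
    using connected_graph_insert[OF connected_graph_singleton singletonI assms] .
  moreover have "{a, b} - {x} = {} \<or> (\<exists>y. {a, b} - {x} = {y})" if "x \<in> {a, b}" for x
    using that by auto
  ultimately show ?thesis
    unfolding nonseparable_iff using connected_graph_singleton by metis
qed

lemma obtain_other_if_two_le_card:
  assumes "finite A" "2 \<le> card A"
  obtains a where "a \<in> A" "a \<noteq> x"
proof -
  have "\<not> A \<subseteq> {x}" using card_mono[of "{x}" A] assms(2) by auto
  then show thesis using that by blast
qed

lemma obtain_two_if_two_le_card:
  assumes "finite A" "2 \<le> card A"
  obtains a b where "a \<in> A" "b \<in> A" "a \<noteq> b"
proof -
  obtain a where "a \<in> A" using assms(2) by fastforce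
  with obtain_other_if_two_le_card[OF assms] that show thesis by blast
qed

lemma obtain_singleton_superset:
  assumes "finite A" "card A \<le> 1" "A \<subseteq> U" "U \<noteq> {}"
  obtains v where "v \<in> U" "A \<subseteq> {v}"
proof (cases "A = {}")
  case True
  obtain v where "v \<in> U" using assms(4) by blast
  then show thesis using True by (intro that) auto
next
  case False
  then have "card A = 1" using assms(1,2) by (simp add: card_gt_0_iff le_eq_less_or_eq)
  then obtain a where "A = {a}" by (rule card_1_singletonE)
  then show thesis using assms(3) by (intro that[of a]) auto
qed

lemma connected_card_le_2_is_clique:
  assumes "finite W" "connected_graph W E" "card W \<le> 2" "\<And>x. {x, x} \<notin> E"
  shows "is_clique W E"
  unfolding is_clique_def
proof (intro ballI impI)
  fix x y assume xy: "x \<in> W" "y \<in> W" "x \<noteq> y"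
  have W: "W = {x, y}"
  proof (rule ccontr)
    assume "W \<noteq> {x, y}"
    then obtain w where w: "w \<in> W" "w \<notin> {x, y}" using xy by blast
    then have "card {x, y, w} \<le> card W" using xy by (intro card_mono[OF assms(1)]) auto
    then show False using xy w assms(3) by auto
  qed
  obtain z where "z \<in> W" "{x, z} \<in> E" using connected_graph_has_neighbor[OF assms(2) xy] .
  then show "{x, y} \<in> E" using W assms(4) by auto
qed

lemma nonseparable_degree_ge_2:
  assumes fin: "finite X" and loop: "\<And>x. {x, x} \<notin> E" and X: "nonseparable X E"
    and X3: "3 \<le> card X" and v: "v \<in> X"
  shows "2 \<le> degree X E v"
proof -
  have "2 \<le> card X" using X3 by simp
  then obtain v' where v': "v' \<in> X" "v' \<noteq> v" by (rule obtain_other_if_two_le_card[OF fin])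
  obtain u where u: "u \<in> X" "{v, u} \<in> E"
    using connected_graph_has_neighbor[OF nonseparable_connected[OF X] v v'(1) v'(2)[symmetric]] .
  have uv: "u \<noteq> v" using u(2) loop by blast
  have "2 \<le> card (X - {u})" using X3 u(1) fin by simp
  then obtain w' where w': "w' \<in> X - {u}" "w' \<noteq> v"
    by (rule obtain_other_if_two_le_card[OF finite_Diff[OF fin]])
  then have "connected_graph (X - {u}) E" using nonseparable_delete[OF X u(1)] by blast
  then obtain w where w: "w \<in> X - {u}" "{v, w} \<in> E"
    using connected_graph_has_neighbor[of "X - {u}" E v w'] v uv w' by blast
  have "{u, w} \<subseteq> {y \<in> X. {v, y} \<in> E}" using u w by blast
  then have "card {u, w} \<le> degree X E v" unfolding degree_def using fin by (intro card_mono) auto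
  moreover have "card {u, w} = 2" using w(1) by auto
  ultimately show ?thesis by simp
qed

lemma degree_Un:
  assumes "finite A" "finite B" "A \<inter> B = {}"
  shows "degree (A \<union> B) E x = card {w \<in> A. {x, w} \<in> E} + card {w \<in> B. {x, w} \<in> E}"
proof -
  have "{w \<in> A \<union> B. {x, w} \<in> E} = {w \<in> A. {x, w} \<in> E} \<union> {w \<in> B. {x, w} \<in> E}" by auto
  then show ?thesis unfolding degree_def using assms by (simp add: card_Un_disjoint disjoint_iff)
qed

lemma degree_insert_vertex:
  assumes "finite U" "y \<notin> U"
  shows "degree (insert y U) E x = card {w \<in> U. {x, w} \<in> E} + (if {x, y} \<in> E then 1 else 0)"
proof -
  have "{w \<in> {y}. {x, w} \<in> E} = (if {x, y} \<in> E then {y} else {})" by auto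
  moreover have "insert y U = U \<union> {y}" by simp
  ultimately show ?thesis using degree_Un[of U "{y}" E x] assms by simp
qed

lemma neighbors_in_clique:
  "is_clique U E \<Longrightarrow> u \<in> U \<Longrightarrow> (\<And>x. {x, x} \<notin> E) \<Longrightarrow> {w \<in> U. {u, w} \<in> E} = U - {u}"
  unfolding is_clique_def by auto

definition attachments :: "'a set set \<Rightarrow> 'a set \<Rightarrow> 'a set \<Rightarrow> 'a set" where
  "attachments E U P = {u \<in> U. \<exists>p\<in>P. {p, u} \<in> E}"

lemma finite_attachments [simp]: "finite U \<Longrightarrow> finite (attachments E U P)"
  unfolding attachments_def by simp

definition minimal_ear :: "'a set set \<Rightarrow> 'a set \<Rightarrow> 'a set \<Rightarrow> bool" where
  "minimal_ear E U P \<longleftrightarrow> connected_graph P E \<and> 2 \<le> card (attachments E U P) \<and>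
     (\<forall>P' \<subseteq> P. connected_graph P' E \<and> 2 \<le> card (attachments E U P') \<longrightarrow> card P \<le> card P')"

lemma minimal_earD:
  assumes "minimal_ear E U P"
  shows "connected_graph P E" "2 \<le> card (attachments E U P)"
    "\<And>P'. P' \<subseteq> P \<Longrightarrow> connected_graph P' E \<Longrightarrow> 2 \<le> card (attachments E U P') \<Longrightarrow>
      card P \<le> card P'"
  using assms unfolding minimal_ear_def by auto

lemma exists_connected_two_attachments:
  assumes fin: "finite X" and X: "nonseparable X E" and U: "U \<subseteq> X" "U \<noteq> X" "2 \<le> card U"
  shows "\<exists>P \<subseteq> X - U. connected_graph P E \<and> 2 \<le> card (attachments E U P)"
proof -
  obtain y where y: "y \<in> X - U" using U by auto
  define C where "C = {q \<in> X - U. (y, q) \<in> (adj E (X - U))\<^sup>*}"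
  have fU: "finite U" using fin U(1) finite_subset by auto
  have "2 \<le> card (attachments E U C)"
  proof (rule ccontr)
    assume "\<not> ?thesis"
    then have "card (attachments E U C) \<le> 1" by simp
    moreover have "attachments E U C \<subseteq> U" unfolding attachments_def by blast
    moreover have "U \<noteq> {}" using U(3) by auto
    ultimately obtain v where v: "v \<in> U" "attachments E U C \<subseteq> {v}"
      using obtain_singleton_superset[OF finite_attachments[OF fU]] by blast
    obtain u' where u': "u' \<in> U" "u' \<noteq> v" using obtain_other_if_two_le_card[OF fU U(3)] .
    have "X - {v} \<noteq> {}" using y v(1) by blast
    then have "connected_graph (X - {v}) E" using nonseparable_delete[OF X] v(1) U(1) by blast
    moreover have "y \<in> X - {v}" "u' \<in> X - {v}" using y v(1) u' U(1) by auto
    ultimately have "(y, u') \<in> (adj E (X - {v}))\<^sup>*" by (rule connected_graphD)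
    moreover have "t \<in> C" if "(y, t) \<in> (adj E (X - {v}))\<^sup>*" for t
      using that
    proof (induction rule: rtrancl_induct)
      case (step t t')
      have t': "t' \<in> X - {v}" "{t, t'} \<in> E" using adjD[OF step(2)] by auto
      have t: "t \<in> X - U" "(y, t) \<in> (adj E (X - U))\<^sup>*" using step(3) unfolding C_def by auto
      have "t' \<notin> U"
        using step(3) t' v(2) unfolding attachments_def by blast
      then have "(t, t') \<in> adj E (X - U)" using t t' by (simp add: adjI)
      with t(2) have "(y, t') \<in> (adj E (X - U))\<^sup>*" by (rule rtrancl_into_rtrancl)
      then show ?case using \<open>t' \<notin> U\<close> t' unfolding C_def by auto
    qed (use y in \<open>simp add: C_def\<close>)
    ultimately have "u' \<in> C" by blast
    then show False using u' unfolding C_def by blast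
  qed
  moreover have "connected_graph C E" unfolding C_def by (rule connected_graph_reachable[OF y])
  moreover have "C \<subseteq> X - U" unfolding C_def by blast
  ultimately show ?thesis by blast
qed

lemma exists_minimal_ear:
  assumes "finite X" "nonseparable X E" "U \<subseteq> X" "U \<noteq> X" "2 \<le> card U"
  obtains P where "P \<subseteq> X - U" "minimal_ear E U P"
proof -
  define ear where "ear P \<longleftrightarrow> P \<subseteq> X - U \<and> connected_graph P E \<and> 2 \<le> card (attachments E U P)"
    for P
  obtain P0 where "ear P0"
    using exists_connected_two_attachments[OF assms] unfolding ear_def by blast
  then obtain P where P: "ear P" and min: "\<And>P'. ear P' \<Longrightarrow> card P \<le> card P'"
    using ex_has_least_nat[of ear P0 card] by blast
  have "minimal_ear E U P"
    unfolding minimal_ear_def using P min unfolding ear_def by blast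
  then show thesis using that P unfolding ear_def by blast
qed

text \<open>Minimality forces every vertex of the ear left after deleting x to see U inside
  P - {x}: otherwise its component could be cut off from P.\<close>

lemma minimal_ear_delete_reaches:
  assumes fU: "finite U" and fP: "finite P" and ear: "minimal_ear E U P"
    and x: "x \<in> P" and y: "y \<in> P - {x}"
  obtains q u where "(y, q) \<in> (adj E (P - {x}))\<^sup>*" "u \<in> U" "{q, u} \<in> E"
proof (rule ccontr)
  assume none: "\<not> thesis"
  note reaches = that
  define Q where "Q = {q \<in> P - {x}. (y, q) \<in> (adj E (P - {x}))\<^sup>*}"
  have Q: "Q \<subseteq> P - {x}" "y \<in> Q" using y unfolding Q_def by auto
  have closed: "{t, t'} \<notin> E" if "t \<in> P - {x} - Q" "t' \<in> Q" for t t'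
  proof
    assume "{t, t'} \<in> E"
    then have "(t', t) \<in> adj E (P - {x})" using that Q(1) by (auto intro: adjI simp: insert_commute)
    then have "t \<in> Q" using that unfolding Q_def by (auto intro: rtrancl_into_rtrancl)
    then show False using that(1) by blast
  qed
  note conn = minimal_earD(1)[OF ear] and att = minimal_earD(2)[OF ear]
    and min = minimal_earD(3)[OF ear]
  have "p \<notin> Q" if "p \<in> P" "u \<in> U" "{p, u} \<in> E" for p u
    using that none reaches unfolding Q_def by blast
  then have "attachments E U P \<subseteq> attachments E U (P - Q)"
    unfolding attachments_def by blast
  then have "2 \<le> card (attachments E U (P - Q))"
    using att card_mono[OF finite_attachments[OF fU]] le_trans by blast
  moreover have "connected_graph (P - Q) E"
    using connected_graph_Diff_closed[OF conn x Q(1) closed] .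
  moreover have "card (P - Q) < card P" using fP Q by (intro psubset_card_mono) auto
  ultimately show False using min[of "P - Q"] by auto
qed

lemma connected_graph_Un_minimal_ear_delete:
  assumes fU: "finite U" and fP: "finite P" and U: "connected_graph U E"
    and ear: "minimal_ear E U P" and x: "x \<in> P"
  shows "connected_graph (U \<union> (P - {x})) E"
proof -
  obtain u0 where u0: "u0 \<in> U" using U unfolding connected_graph_iff by blast
  let ?A = "adj E (U \<union> (P - {x}))"
  show ?thesis
  proof (rule connected_graphI[OF UnI1[OF u0]])
    fix y assume "y \<in> U \<union> (P - {x})"
    then show "(u0, y) \<in> ?A\<^sup>*"
    proof
      assume "y \<in> U"
      then show ?thesis using connected_graphD[OF U u0] rtrancl_adj_mono[of U] by blast
    next
      assume y: "y \<in> P - {x}"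
      obtain q u where q: "(y, q) \<in> (adj E (P - {x}))\<^sup>*" and u: "u \<in> U" "{q, u} \<in> E"
        using minimal_ear_delete_reaches[OF fU fP ear x y] .
      have "(y, q) \<in> ?A\<^sup>*" using rtrancl_adj_mono[OF _ q] by blast
      moreover have "(q, u) \<in> ?A" using rtrancl_adj_closed[OF q y] u by (simp add: adjI)
      moreover have "(u, u0) \<in> ?A\<^sup>*"
        using connected_graphD[OF U u(1) u0] rtrancl_adj_mono[of U] by blast
      ultimately have "(y, u0) \<in> ?A\<^sup>*" by (meson rtrancl_into_rtrancl rtrancl_trans)
      then show ?thesis by (rule rtrancl_adj_sym)
    qed
  qed
qed

lemma nonseparable_Un_minimal_ear:
  assumes fU: "finite U" and fP: "finite P" and U: "nonseparable U E" "2 \<le> card U"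
    and disj: "U \<inter> P = {}" and ear: "minimal_ear E U P"
  shows "nonseparable (U \<union> P) E"
  unfolding nonseparable_iff
proof (intro conjI ballI impI)
  have cU: "connected_graph U E" using U(1) by (rule nonseparable_connected)
  note cP = minimal_earD(1)[OF ear] and att = minimal_earD(2)[OF ear]
  have edge: "\<exists>u p. u \<in> U \<and> u \<noteq> x \<and> p \<in> P \<and> {u, p} \<in> E" for x
  proof -
    obtain u where u: "u \<in> attachments E U P" "u \<noteq> x"
      using obtain_other_if_two_le_card[OF finite_attachments[OF fU] att] .
    then obtain p where "u \<in> U" "p \<in> P" "{p, u} \<in> E" unfolding attachments_def by blast
    moreover have "{u, p} = {p, u}" by blast
    ultimately show ?thesis using u(2) by metis
  qed
  then show "connected_graph (U \<union> P) E" using connected_graph_Un[OF cU cP] by blast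
  fix x assume x: "x \<in> U \<union> P" "U \<union> P - {x} \<noteq> {}"
  show "connected_graph (U \<union> P - {x}) E"
  proof (cases "x \<in> U")
    case True
    obtain w where "w \<in> U" "w \<noteq> x" using obtain_other_if_two_le_card[OF fU U(2)] .
    then have "connected_graph (U - {x}) E" using nonseparable_delete[OF U(1) True] by blast
    moreover obtain u p where "u \<in> U - {x}" "p \<in> P" "{u, p} \<in> E" using edge by blast
    ultimately have "connected_graph (U - {x} \<union> P) E" using connected_graph_Un[OF _ cP] by blast
    moreover have "U - {x} \<union> P = U \<union> P - {x}" using True disj by blast
    ultimately show ?thesis by simp
  next
    case False
    then have "connected_graph (U \<union> (P - {x})) E"
      using connected_graph_Un_minimal_ear_delete[OF fU fP cU ear] x by blast
    moreover have "U \<union> P - {x} = U \<union> (P - {x})" using False by blast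
    ultimately show ?thesis by simp
  qed
qed

lemma minimal_ear_single_attachment:
  assumes ear: "minimal_ear E U P" and p: "p \<in> P" and P2: "2 \<le> card P"
  shows "card {u \<in> U. {p, u} \<in> E} \<le> 1"
proof (rule ccontr)
  assume "\<not> ?thesis"
  moreover have "attachments E U {p} = {u \<in> U. {p, u} \<in> E}" unfolding attachments_def by auto
  ultimately have "2 \<le> card (attachments E U {p})" by simp
  then have "card P \<le> card {p}"
    using minimal_earD(3)[OF ear _ connected_graph_singleton] p by blast
  then show False using P2 by simp
qed

lemma minimal_ear_delete_attachments:
  assumes fP: "finite P" and ear: "minimal_ear E U P" and z: "z \<in> P" "connected_graph (P - {z}) E"
  shows "card (attachments E U (P - {z})) \<le> 1"
proof (rule ccontr)
  assume "\<not> ?thesis"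
  then have "card P \<le> card (P - {z})" using minimal_earD(3)[OF ear, of "P - {z}"] z by auto
  then show False using card_Diff1_less[OF fP z(1)] by simp
qed

lemma minimal_ear_ends:
  assumes fU: "finite U" and ear: "minimal_ear E U P" and P2: "2 \<le> card P"
  obtains p1 p2 where "p1 \<in> P" "p2 \<in> P" "p1 \<noteq> p2"
    "\<And>S. p1 \<in> S \<Longrightarrow> p2 \<in> S \<Longrightarrow> 2 \<le> card (attachments E U S)"
proof -
  obtain u1 u2 where u: "u1 \<in> attachments E U P" "u2 \<in> attachments E U P" "u1 \<noteq> u2"
    using obtain_two_if_two_le_card[OF finite_attachments[OF fU] minimal_earD(2)[OF ear]] by metis
  obtain p1 where p1: "p1 \<in> P" "u1 \<in> U" "{p1, u1} \<in> E"
    using u(1) unfolding attachments_def by blast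
  obtain p2 where p2: "p2 \<in> P" "u2 \<in> U" "{p2, u2} \<in> E"
    using u(2) unfolding attachments_def by blast
  have "p1 \<noteq> p2"
  proof
    assume "p1 = p2"
    then have "{u1, u2} \<subseteq> {u \<in> U. {p1, u} \<in> E}" using p1 p2 by blast
    then have "card {u1, u2} \<le> card {u \<in> U. {p1, u} \<in> E}"
      by (rule card_mono[rotated]) (use fU in simp)
    then show False using minimal_ear_single_attachment[OF ear p1(1) P2] u(3) by simp
  qed
  moreover have "2 \<le> card (attachments E U S)" if "p1 \<in> S" "p2 \<in> S" for S
  proof -
    have "{u1, u2} \<subseteq> attachments E U S" using that p1 p2 unfolding attachments_def by auto
    then have "card {u1, u2} \<le> card (attachments E U S)"
      by (rule card_mono[OF finite_attachments[OF fU]])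
    then show ?thesis using u(3) by simp
  qed
  ultimately show thesis using that p1(1) p2(1) by blast
qed

text \<open>Deleting the end p1 keeps P connected. Some vertex z \<noteq> p2 can then be deleted from
  P - {p1}, and if p1 had a second neighbour in P, also from P; minimality forbids this.\<close>

lemma minimal_ear_has_low_degree_vertex:
  assumes fU: "finite U" and fP: "finite P" and loop: "\<And>x. {x, x} \<notin> E"
    and ear: "minimal_ear E U P" and P2: "2 \<le> card P"
  shows "\<exists>p\<in>P. card {w \<in> P. {p, w} \<in> E} \<le> 1"
proof (rule ccontr)
  assume "\<not> ?thesis"
  then have deg: "2 \<le> card {w \<in> P. {p, w} \<in> E}" if "p \<in> P" for p
    using that by auto
  obtain p1 p2 where p: "p1 \<in> P" "p2 \<in> P" "p1 \<noteq> p2"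
    and two: "\<And>S. p1 \<in> S \<Longrightarrow> p2 \<in> S \<Longrightarrow> 2 \<le> card (attachments E U S)"
    using minimal_ear_ends[OF fU ear P2] by metis
  have cut: "\<not> connected_graph (P - {z}) E" if "z \<in> P" "z \<noteq> p1" "z \<noteq> p2" for z
    using minimal_ear_delete_attachments[OF fP ear that(1)] two[of "P - {z}"] p(1,2) that
    by fastforce
  have "P \<noteq> {p2}" using P2 by auto
  then obtain z1 where z1: "z1 \<in> P" "z1 \<noteq> p2" "connected_graph (P - {z1}) E"
    using connected_graph_delete_other_vertex[OF fP minimal_earD(1)[OF ear] p(2)] by blast
  then have cT: "connected_graph (P - {p1}) E" using cut by blast
  have nbrs: "{w \<in> P. {p1, w} \<in> E} \<subseteq> P - {p1}" using loop[of p1] by blast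
  have fT: "finite (P - {p1})" using fP by simp
  have big: "2 \<le> card (P - {p1})" using card_mono[OF fT nbrs] deg[OF p(1)] by simp
  have "P - {p1} \<noteq> {p2}"
  proof
    assume "P - {p1} = {p2}"
    with big show False by simp
  qed
  moreover have "p2 \<in> P - {p1}" using p by simp
  ultimately obtain z where z: "z \<in> P - {p1}" "z \<noteq> p2" "connected_graph (P - {p1} - {z}) E"
    using connected_graph_delete_other_vertex[OF fT cT] by blast
  have "\<not> {w \<in> P. {p1, w} \<in> E} \<subseteq> {z}"
  proof
    assume "{w \<in> P. {p1, w} \<in> E} \<subseteq> {z}"
    then have "card {w \<in> P. {p1, w} \<in> E} \<le> card {z}" by (rule card_mono[rotated]) simp
    then show False using deg[OF p(1)] by simp
  qed
  then obtain q where q: "q \<in> P - {p1} - {z}" "{p1, q} \<in> E" using nbrs by blast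
  have "connected_graph (insert p1 (P - {p1} - {z})) E"
    using connected_graph_insert[OF z(3) q(1) q(2)] .
  moreover have "insert p1 (P - {p1} - {z}) = P - {z}" using z p(1) by blast
  ultimately show False using cut[of z] z by simp
qed

section \<open>Regular nonseparable graphs\<close>

lemma regular_extension_by_vertex_is_clique:
  assumes fU: "finite U" and loop: "\<And>x. {x, x} \<notin> E" and y: "y \<notin> U"
    and U: "is_clique U E \<or> is_odd_cycle U E"
    and att: "2 \<le> card {u \<in> U. {y, u} \<in> E}"
    and reg: "\<And>x. x \<in> insert y U \<Longrightarrow> degree (insert y U) E x = k" and k: "3 \<le> k"
  shows "is_clique (insert y U) E"
proof -
  have deg: "k = card {w \<in> U. {u, w} \<in> E} + (if {u, y} \<in> E then 1 else 0)" if "u \<in> U" for u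
    using reg[of u] degree_insert_vertex[OF fU y] that by simp
  obtain u1 where u1: "u1 \<in> U" "{u1, y} \<in> E"
    using att by (metis (no_types, lifting) card.empty empty_Collect_eq insert_commute
        not_numeral_le_zero)
  have "is_clique U E"
  proof (cases "is_odd_cycle U E")
    case True
    then have cyc: "card {w \<in> U. {u, w} \<in> E} = 2" if "u \<in> U" for u
      using that unfolding is_odd_cycle_def degree_def by blast
    have all_y: "{u, y} \<in> E" if "u \<in> U" for u
      using deg[OF that] cyc[OF that] k by (cases "{u, y} \<in> E") auto
    have "k = 3" using deg[OF u1(1)] cyc[OF u1(1)] u1(2) by simp
    moreover have "{w \<in> insert y U. {y, w} \<in> E} = U"
      using all_y loop[of y] by (auto simp: insert_commute)
    ultimately have "card U = 3" using reg[of y] unfolding degree_def by simp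
    show ?thesis unfolding is_clique_def
    proof (intro ballI impI)
      fix x z assume xz: "x \<in> U" "z \<in> U" "x \<noteq> z"
      have "{w \<in> U. {x, w} \<in> E} \<subseteq> U - {x}" using loop[of x] by blast
      moreover have "card (U - {x}) = 2" using \<open>card U = 3\<close> xz(1) fU by simp
      ultimately have "{w \<in> U. {x, w} \<in> E} = U - {x}"
        using cyc[OF xz(1)] fU by (metis (no_types, lifting) card_subset_eq finite_Diff)
      then show "{x, z} \<in> E" using xz by blast
    qed
  qed (use U in blast)
  have all_y: "{u, y} \<in> E" if "u \<in> U" for u
    using deg[OF that] deg[OF u1(1)] u1 that loop neighbors_in_clique[OF \<open>is_clique U E\<close>] fU
    by (cases "{u, y} \<in> E") (auto simp: card_Diff_singleton)
  show ?thesis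
    using \<open>is_clique U E\<close> all_y unfolding is_clique_def by (auto simp: insert_commute)
qed

lemma exists_maximal_proper_nonseparable:
  assumes fX: "finite X" and ab: "{a, b} \<in> E" "a \<noteq> b" "a \<in> X" "b \<in> X" "{a, b} \<noteq> X"
  obtains U where "U \<subseteq> X" "U \<noteq> X" "2 \<le> card U" "nonseparable U E"
    "\<And>U'. U' \<subseteq> X \<Longrightarrow> U' \<noteq> X \<Longrightarrow> 2 \<le> card U' \<Longrightarrow> nonseparable U' E \<Longrightarrow> card U' \<le> card U"
proof -
  define proper where "proper U \<longleftrightarrow> U \<subseteq> X \<and> U \<noteq> X \<and> 2 \<le> card U \<and> nonseparable U E" for U
  have "proper {a, b}" unfolding proper_def using ab nonseparable_edge[OF ab(1)] by simp
  moreover have "card U < card X + 1" if "proper U" for U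
    using that card_mono[OF fX, of U] unfolding proper_def by simp
  ultimately obtain U where U: "proper U" and max: "\<And>U'. proper U' \<Longrightarrow> card U' \<le> card U"
    using ex_has_greatest_nat[of proper "{a, b}" card "card X + 1"] by blast
  show thesis
  proof (rule that)
    show "U \<subseteq> X" "U \<noteq> X" "2 \<le> card U" "nonseparable U E" using U unfolding proper_def by auto
  qed (simp add: max proper_def)
qed

text \<open>A maximal proper nonseparable U together with a minimal ear P is nonseparable again,
  so maximality leaves nothing outside U \<union> P.\<close>

lemma nonseparable_split_off_ear:
  assumes fX: "finite X" and loop: "\<And>x. {x, x} \<notin> E" and X: "nonseparable X E"
    and nclq: "\<not> is_clique X E"
  obtains U P where "U \<subseteq> X" "U \<noteq> X" "2 \<le> card U" "nonseparable U E" "minimal_ear E U P"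
    "U \<inter> P = {}" "X = U \<union> P"
proof -
  obtain a a' where a: "a \<in> X" "a' \<in> X" "a \<noteq> a'" "{a, a'} \<notin> E"
    using nclq unfolding is_clique_def by blast
  obtain b where b: "b \<in> X" "{a, b} \<in> E"
    using connected_graph_has_neighbor[OF nonseparable_connected[OF X] a(1-3)] .
  have "a \<noteq> b" using b(2) loop by blast
  moreover have "{a, b} \<noteq> X" using a b by blast
  ultimately obtain U where U: "U \<subseteq> X" "U \<noteq> X" "2 \<le> card U" "nonseparable U E"
    and Umax: "\<And>U'. U' \<subseteq> X \<Longrightarrow> U' \<noteq> X \<Longrightarrow> 2 \<le> card U' \<Longrightarrow> nonseparable U' E \<Longrightarrow>
      card U' \<le> card U"
    using exists_maximal_proper_nonseparable[OF fX b(2) _ a(1) b(1)] by blast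
  have fU: "finite U" using finite_subset[OF U(1) fX] .
  obtain P where P: "P \<subseteq> X - U" "minimal_ear E U P" using exists_minimal_ear[OF fX X U(1-3)] .
  have fP: "finite P" using finite_subset[OF P(1)] fX by blast
  have "P \<noteq> {}" using minimal_earD(1)[OF P(2)] unfolding connected_graph_iff by blast
  then have cP: "0 < card P" using fP by (simp add: card_gt_0_iff)
  have disj: "U \<inter> P = {}" using P(1) by blast
  have card_UP: "card (U \<union> P) = card U + card P" using card_Un_disjoint[OF fU fP disj] .
  have "X = U \<union> P"
  proof (rule ccontr)
    assume "X \<noteq> U \<union> P"
    then have "card (U \<union> P) \<le> card U"
      using Umax nonseparable_Un_minimal_ear[OF fU fP U(4,3) disj P(2)] U(1,3) P(1) card_UP
      by (metis Diff_subset Un_subset_iff order.trans le_add1)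
    then show False using card_UP cP by simp
  qed
  then show thesis using that U P(2) disj by blast
qed

definition non_gallai_subgraph :: "'a set \<Rightarrow> 'a set set \<Rightarrow> 'a set \<Rightarrow> bool" where
  "non_gallai_subgraph X E W \<longleftrightarrow> W \<subseteq> X \<and> nonseparable W E \<and> 3 \<le> card W \<and>
     \<not> is_clique W E \<and> \<not> is_odd_cycle W E"

lemma regular_nonseparable_has_non_gallai_part:
  assumes fX: "finite X" and loop: "\<And>x. {x, x} \<notin> E" and X: "nonseparable X E"
    and nclq: "\<not> is_clique X E" and reg: "\<And>x. x \<in> X \<Longrightarrow> degree X E x = k" and k: "3 \<le> k"
  shows "\<exists>W. non_gallai_subgraph X E W \<and> W \<noteq> X"
proof (rule ccontr)
  assume "\<not> ?thesis"
  then have gallai: "is_clique W E \<or> is_odd_cycle W E"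
    if "W \<subseteq> X" "W \<noteq> X" "nonseparable W E" "3 \<le> card W" for W
    using that unfolding non_gallai_subgraph_def by blast
  obtain U P where U: "U \<subseteq> X" "U \<noteq> X" "2 \<le> card U" "nonseparable U E"
    and P: "minimal_ear E U P" and disj: "U \<inter> P = {}" and XUP: "X = U \<union> P"
    using nonseparable_split_off_ear[OF fX loop X nclq] by metis
  have fU: "finite U" and fP: "finite P" using fX XUP by auto
  have U_gallai: "is_clique U E \<or> is_odd_cycle U E"
  proof (cases "3 \<le> card U")
    case False
    then show ?thesis
      using connected_card_le_2_is_clique[OF fU nonseparable_connected[OF U(4)] _ loop] by simp
  qed (use gallai U in blast)
  have "P \<noteq> {}" using U(2) XUP by blast
  then have cP: "0 < card P" using fP by (simp add: card_gt_0_iff)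
  show False
  proof (cases "card P = 1")
    case True
    then obtain y where y: "P = {y}" by (rule card_1_singletonE)
    have "attachments E U {y} = {u \<in> U. {y, u} \<in> E}" unfolding attachments_def by auto
    then have "2 \<le> card {u \<in> U. {y, u} \<in> E}" using minimal_earD(2)[OF P] y by simp
    moreover have "X = insert y U" using XUP y by simp
    moreover have "y \<notin> U" using disj y by simp
    ultimately have "is_clique X E"
      using regular_extension_by_vertex_is_clique[OF fU loop _ U_gallai _ _ k] reg by simp
    then show False using nclq by contradiction
  next
    case False
    then have P2: "2 \<le> card P" using cP by simp
    obtain p where p: "p \<in> P" "card {w \<in> P. {p, w} \<in> E} \<le> 1"
      using minimal_ear_has_low_degree_vertex[OF fU fP loop P P2] by blast
    have "degree X E p = card {w \<in> U. {p, w} \<in> E} + card {w \<in> P. {p, w} \<in> E}"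
      using degree_Un[OF fU fP disj] XUP by simp
    also have "\<dots> \<le> 2" using minimal_ear_single_attachment[OF P p(1) P2] p(2) by simp
    finally show False using reg[of p] k XUP p(1) by simp
  qed
qed

lemma graph_loopless: "graph V E \<Longrightarrow> {x, x} \<notin> E"
  unfolding graph_def by fastforce

lemma nonseparable_mono_edges: "nonseparable W E \<Longrightarrow> E \<subseteq> F \<Longrightarrow> nonseparable W F"
  unfolding nonseparable_iff using connected_graph_mono_edges by blast

lemma same_edges_within:
  assumes "\<And>u v. u \<in> W \<Longrightarrow> v \<in> W \<Longrightarrow> {u, v} \<in> F \<longleftrightarrow> {u, v} \<in> E"
  shows "nonseparable W F \<longleftrightarrow> nonseparable W E" "is_clique W F \<longleftrightarrow> is_clique W E"
    "is_odd_cycle W F \<longleftrightarrow> is_odd_cycle W E"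
proof -
  have conn: "connected_graph Y F \<longleftrightarrow> connected_graph Y E" if "Y \<subseteq> W" for Y
    using assms that by (intro connected_graph_cong) blast
  then show "nonseparable W F \<longleftrightarrow> nonseparable W E"
    unfolding nonseparable_iff by (metis Diff_subset order_refl)
  show "is_clique W F \<longleftrightarrow> is_clique W E" using assms unfolding is_clique_def by blast
  have "degree W F x = degree W E x" if "x \<in> W" for x
    unfolding degree_def using assms that by (metis (no_types, lifting) Collect_cong)
  then show "is_odd_cycle W F \<longleftrightarrow> is_odd_cycle W E"
    unfolding is_odd_cycle_def using conn[OF order_refl] by auto
qed

lemma block_edges:
  assumes "block V E W F"
  shows "F = {e \<in> E. e \<subseteq> W}"
proof -
  have sub: "subgraph W F V E" and nsF: "nonseparable W F"
    and max: "\<And>W' F'. subgraph W' F' V E \<Longrightarrow> nonseparable W' F' \<Longrightarrow> W \<subseteq> W' \<Longrightarrow> F \<subseteq> F' \<Longrightarrow>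
      W' = W \<and> F' = F"
    using assms unfolding block_def by blast+
  have "F \<subseteq> {e \<in> E. e \<subseteq> W}" using sub unfolding subgraph_def by blast
  moreover have "subgraph W {e \<in> E. e \<subseteq> W} V E" using sub unfolding subgraph_def by blast
  ultimately show ?thesis using max nonseparable_mono_edges[OF nsF] by blast
qed

lemma block_non_gallai_subgraph:
  assumes G: "graph V E" and B: "block V E W F"
    and nclq: "\<not> is_clique W F" and ncyc: "\<not> is_odd_cycle W F"
  shows "non_gallai_subgraph V E W"
proof -
  have WV: "W \<subseteq> V" and nsF: "nonseparable W F" using B unfolding block_def subgraph_def by auto
  have "\<And>u v. u \<in> W \<Longrightarrow> v \<in> W \<Longrightarrow> {u, v} \<in> F \<longleftrightarrow> {u, v} \<in> E"
    using block_edges[OF B] by auto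
  note cong = same_edges_within[OF this]
  have nsE: "nonseparable W E" and nclqE: "\<not> is_clique W E" and ncycE: "\<not> is_odd_cycle W E"
    using nsF nclq ncyc cong by auto
  have "finite W" using G WV finite_subset unfolding graph_def by blast
  then have "3 \<le> card W"
    using connected_card_le_2_is_clique[OF _ nonseparable_connected[OF nsE] _ graph_loopless[OF G]]
      nclqE by fastforce
  then show ?thesis unfolding non_gallai_subgraph_def using WV nsE nclqE ncycE by blast
qed

section \<open>Colourings that dominate a precolouring\<close>

definition dominating_L_coloring ::
  "'a set \<Rightarrow> 'a set set \<Rightarrow> ('a \<Rightarrow> 'c set) \<Rightarrow> ('a \<Rightarrow> 'c option) \<Rightarrow> ('a \<Rightarrow> 'c) \<Rightarrow> bool" where
  "dominating_L_coloring V E L g f \<longleftrightarrow> proper_L_coloring V E L f \<and>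
     (\<forall>\<alpha>. card {x. g x = Some \<alpha>} \<le> card {x \<in> V. f x = \<alpha>})"

lemma proper_partial_L_coloringD:
  assumes "proper_partial_L_coloring V E L g"
  shows "dom g \<subseteq> V" "g x = Some c \<Longrightarrow> c \<in> L x"
    "{x, y} \<in> E \<Longrightarrow> x \<in> dom g \<Longrightarrow> y \<in> dom g \<Longrightarrow> g x \<noteq> g y"
  using assms unfolding proper_partial_L_coloring_def by auto

lemma finite_precolored:
  "finite V \<Longrightarrow> proper_partial_L_coloring V E L g \<Longrightarrow> finite {x. g x = Some a}"
proof -
  assume "finite V" "proper_partial_L_coloring V E L g"
  then have "{x. g x = Some a} \<subseteq> V" unfolding proper_partial_L_coloring_def by auto
  then show ?thesis using \<open>finite V\<close> by (rule finite_subset)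
qed

lemma dominating_L_coloring_empty:
  assumes "proper_partial_L_coloring {} E L g"
  shows "dominating_L_coloring {} E L g f"
proof -
  have "{x. g x = Some a} = {}" for a using proper_partial_L_coloringD(1)[OF assms] by auto
  then show ?thesis unfolding dominating_L_coloring_def proper_L_coloring_def by simp
qed

lemma proper_partial_L_coloring_delete_uncolored:
  "proper_partial_L_coloring X E L g \<Longrightarrow> g z = None \<Longrightarrow>
     proper_partial_L_coloring (X - {z}) E L g"
  unfolding proper_partial_L_coloring_def by auto

lemma degree_delete_vertex:
  assumes "finite X" "x \<noteq> v"
  shows "degree (X - {v}) E x = (if {x, v} \<in> E \<and> v \<in> X then degree X E x - 1 else degree X E x)"
proof -
  have "{y \<in> X - {v}. {x, y} \<in> E} = {y \<in> X. {x, y} \<in> E} - {v}" by blast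
  then show ?thesis unfolding degree_def using assms by (auto simp: card_Diff_singleton_if)
qed

lemma degree_list_assignment_delete:
  assumes "finite X" "degree_list_assignment X E L"
  shows "degree_list_assignment (X - {z}) E L"
proof -
  have "degree (X - {z}) E x \<le> degree X E x" for x
    unfolding degree_def using assms(1) by (intro card_mono) auto
  then show ?thesis using assms(2) unfolding degree_list_assignment_def by (meson DiffD1 le_trans)
qed

lemma degree_list_assignment_nonempty:
  assumes "degree_list_assignment X E L" "x \<in> X" "0 < degree X E x"
  shows "L x \<noteq> {}"
  using assms unfolding degree_list_assignment_def by auto

definition reduce_lists :: "'a set set \<Rightarrow> 'a \<Rightarrow> 'c \<Rightarrow> ('a \<Rightarrow> 'c set) \<Rightarrow> 'a \<Rightarrow> 'c set" where
  "reduce_lists E v c L x = (if {v, x} \<in> E then L x - {c} else L x)"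

definition reduce_precoloring ::
  "'a set set \<Rightarrow> 'a \<Rightarrow> 'c \<Rightarrow> ('a \<Rightarrow> 'c option) \<Rightarrow> 'a \<Rightarrow> 'c option" where
  "reduce_precoloring E v c g x = (if x = v \<or> {v, x} \<in> E \<and> g x = Some c then None else g x)"

definition safe_color ::
  "'a set set \<Rightarrow> ('a \<Rightarrow> 'c set) \<Rightarrow> ('a \<Rightarrow> 'c option) \<Rightarrow> 'a \<Rightarrow> 'c \<Rightarrow> bool" where
  "safe_color E L g v c \<longleftrightarrow> g v = Some c \<or>
     g v = None \<and> c \<in> L v \<and> card {y. {v, y} \<in> E \<and> g y = Some c} \<le> 1"

lemma card_reduce_lists:
  assumes "finite (L x)"
  shows "card (L x) \<le> card (reduce_lists E v c L x) + (if {v, x} \<in> E then 1 else 0)"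
  using assms by (cases "c \<in> L x") (auto simp: reduce_lists_def card_gt_0_iff)

lemma infinite_reduce_lists: "infinite (L x) \<Longrightarrow> infinite (reduce_lists E v c L x)"
  by (simp add: reduce_lists_def)

lemma degree_list_assignment_reduce:
  assumes fin: "finite X" and v: "v \<in> X" and L: "degree_list_assignment X E L"
  shows "degree_list_assignment (X - {v}) E (reduce_lists E v c L)"
  unfolding degree_list_assignment_def
proof
  fix x assume x: "x \<in> X - {v}"
  show "infinite (reduce_lists E v c L x) \<or> degree (X - {v}) E x \<le> card (reduce_lists E v c L x)"
  proof (cases "finite (L x)")
    case True
    then have "degree X E x \<le> card (L x)" using L x unfolding degree_list_assignment_def by auto
    then show ?thesis
      using card_reduce_lists[of L x E v c, OF True] degree_delete_vertex[OF fin, of x v E] x v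
      by (auto simp: insert_commute split: if_splits)
  qed (simp add: infinite_reduce_lists)
qed

lemma slack_reduce:
  assumes fin: "finite X" and "r \<noteq> v" "v \<in> X"
    and slack: "infinite (L r) \<or> degree X E r < card (L r)"
  shows "infinite (reduce_lists E v c L r) \<or> degree (X - {v}) E r < card (reduce_lists E v c L r)"
proof (cases "finite (L r)")
  case True
  then show ?thesis
    using slack degree_pos_if_edge[OF fin assms(3), of r E] card_reduce_lists[of L r E v c, OF True]
      degree_delete_vertex[OF fin, of r v E] assms(2,3)
    by (auto simp: insert_commute split: if_splits)
qed (simp add: infinite_reduce_lists)

lemma proper_partial_L_coloring_reduce:
  assumes "proper_partial_L_coloring X E L g"
  shows "proper_partial_L_coloring (X - {v}) E (reduce_lists E v c L) (reduce_precoloring E v c g)"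
  using proper_partial_L_coloringD[OF assms]
  unfolding proper_partial_L_coloring_def reduce_precoloring_def reduce_lists_def
  by (auto simp: dom_def split: if_splits)

lemma card_precolored_reduce:
  assumes fin: "finite X" and g: "proper_partial_L_coloring X E L g" and c: "safe_color E L g v c"
  shows "card {x. g x = Some a} \<le>
    card {x. reduce_precoloring E v c g x = Some a} + (if a = c then 1 else 0)"
proof -
  let ?G = "{x. g x = Some a}" and ?R = "{x. reduce_precoloring E v c g x = Some a}"
  let ?D = "{x. g x = Some a \<and> reduce_precoloring E v c g x = None}"
  have fG: "finite ?G" using finite_precolored[OF fin g] .
  have sub: "?R \<subseteq> ?G" "?D \<subseteq> ?G" "?G \<subseteq> ?R \<union> ?D"
    unfolding reduce_precoloring_def by (auto split: if_splits)
  have "card ?G \<le> card (?R \<union> ?D)"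
    using finite_subset[OF sub(1) fG] finite_subset[OF sub(2) fG] sub(3) by (intro card_mono) auto
  also have "\<dots> \<le> card ?R + card ?D" by (rule card_Un_le)
  finally have "card ?G \<le> card ?R + card ?D" .
  moreover have "card ?D \<le> (if a = c then 1 else 0)"
  proof (cases "a = c")
    case False
    then have "?D = {}" using c unfolding reduce_precoloring_def safe_color_def by auto
    then have "card ?D = 0" by (metis card.empty)
    then show ?thesis by simp
  next
    case True
    show ?thesis
    proof (cases "g v = Some c")
      case True
      then have "?D \<subseteq> {v}"
        using proper_partial_L_coloringD(3)[OF g, of v] \<open>a = c\<close>
        unfolding reduce_precoloring_def by (force simp: dom_def split: if_splits)
      then show ?thesis using card_mono[of "{v}" ?D] \<open>a = c\<close> by simp
    next
      case False
      then have gv: "g v = None" "card {y. {v, y} \<in> E \<and> g y = Some c} \<le> 1"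
        using c unfolding safe_color_def by auto
      then have "?D \<subseteq> {y. {v, y} \<in> E \<and> g y = Some c}"
        using \<open>a = c\<close> unfolding reduce_precoloring_def by (auto split: if_splits)
      moreover have "finite {y. {v, y} \<in> E \<and> g y = Some c}"
        using finite_precolored[OF fin g, of c] by (rule finite_subset[rotated]) auto
      ultimately have "card ?D \<le> card {y. {v, y} \<in> E \<and> g y = Some c}" by (rule card_mono[rotated])
      then show ?thesis using gv(2) \<open>a = c\<close> by simp
    qed
  qed
  ultimately show ?thesis by linarith
qed

lemma dominating_L_coloring_extend:
  assumes fin: "finite X" and v: "v \<in> X" and loop: "\<And>x. {x, x} \<notin> E"
    and g: "proper_partial_L_coloring X E L g" and c: "safe_color E L g v c"
    and f: "dominating_L_coloring (X - {v}) E (reduce_lists E v c L) (reduce_precoloring E v c g) f"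
  shows "dominating_L_coloring X E L g (f(v := c))"
  unfolding dominating_L_coloring_def proper_L_coloring_def
proof (intro conjI ballI allI impI)
  have fL: "f x \<in> reduce_lists E v c L x" if "x \<in> X - {v}" for x
    using f that unfolding dominating_L_coloring_def proper_L_coloring_def by blast
  have "c \<in> L v" using c proper_partial_L_coloringD(2)[OF g] unfolding safe_color_def by blast
  then show "(f(v := c)) x \<in> L x" if "x \<in> X" for x
    using fL[of x] that unfolding reduce_lists_def by (auto split: if_splits)
  have nbr: "f y \<noteq> c" if "y \<in> X - {v}" "{v, y} \<in> E" for y
    using fL[OF that(1)] that(2) unfolding reduce_lists_def by simp
  fix x y assume xy: "{x, y} \<in> E \<and> x \<in> X \<and> y \<in> X"
  then have "x \<noteq> y" using loop by blast
  then show "(f(v := c)) x \<noteq> (f(v := c)) y"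
    using f xy nbr[of x] nbr[of y] unfolding dominating_L_coloring_def proper_L_coloring_def
    by (auto simp: insert_commute)
next
  fix a
  have "card {x. reduce_precoloring E v c g x = Some a} \<le> card {x \<in> X - {v}. f x = a}"
    using f unfolding dominating_L_coloring_def by blast
  then have "card {x. g x = Some a} \<le> card {x \<in> X - {v}. f x = a} + (if a = c then 1 else 0)"
    using card_precolored_reduce[OF fin g c, of a] by linarith
  also have "\<dots> = card {x \<in> X. (f(v := c)) x = a}"
  proof (cases "a = c")
    case True
    then have "{x \<in> X. (f(v := c)) x = a} = insert v {x \<in> X - {v}. f x = a}" using v by auto
    then show ?thesis using True fin by simp
  next
    case False
    then have "{x \<in> X. (f(v := c)) x = a} = {x \<in> X - {v}. f x = a}" by auto
    then show ?thesis using False by simp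
  qed
  finally show "card {x. g x = Some a} \<le> card {x \<in> X. (f(v := c)) x = a}" .
qed

lemma exists_safe_color:
  assumes fin: "finite X" and v: "v \<in> X" and g: "proper_partial_L_coloring X E L g"
    and L: "degree_list_assignment X E L" and ne: "L v \<noteq> {}"
  shows "\<exists>c. safe_color E L g v c"
proof (cases "g v")
  case (Some c)
  then show ?thesis unfolding safe_color_def by blast
next
  case None
  let ?N = "{y \<in> X. {v, y} \<in> E}" and ?S = "\<lambda>c. {y. {v, y} \<in> E \<and> g y = Some c}"
  have SN: "?S c \<subseteq> ?N" for c using proper_partial_L_coloringD(1)[OF g] by auto
  have fN: "finite ?N" using fin by simp
  show ?thesis
  proof (rule ccontr)
    assume "\<not> ?thesis"
    then have two: "2 \<le> card (?S c)" if "c \<in> L v" for c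
      using that None unfolding safe_color_def by force
    have "L v \<subseteq> (\<lambda>y. the (g y)) ` ?N"
    proof
      fix c assume "c \<in> L v"
      then have "?S c \<noteq> {}" using two[of c] by (metis card.empty not_numeral_le_zero)
      then obtain y where "y \<in> ?S c" by blast
      then show "c \<in> (\<lambda>y. the (g y)) ` ?N" using SN by force
    qed
    then have fL: "finite (L v)" using fN finite_surj by blast
    have "2 * card (L v) = (\<Sum>c\<in>L v. 2)" by simp
    also have "\<dots> \<le> (\<Sum>c\<in>L v. card (?S c))" using two by (rule sum_mono)
    also have "\<dots> = card (\<Union>c\<in>L v. ?S c)"
      using fL fN SN by (intro card_UN_disjoint[symmetric]) (auto intro: finite_subset)
    also have "\<dots> \<le> card ?N" using fN SN by (intro card_mono) auto
    also have "\<dots> \<le> card (L v)"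
      using L v fL unfolding degree_list_assignment_def degree_def by auto
    finally show False using fL ne by simp
  qed
qed

lemma dominating_L_coloring_peel:
  assumes fin: "finite X" and v: "v \<in> X" and loop: "\<And>x. {x, x} \<notin> E"
    and L: "degree_list_assignment X E L" and g: "proper_partial_L_coloring X E L g"
    and ne: "L v \<noteq> {}"
    and reduced: "\<And>c. safe_color E L g v c \<Longrightarrow>
      \<exists>f. dominating_L_coloring (X - {v}) E (reduce_lists E v c L) (reduce_precoloring E v c g) f"
  shows "\<exists>f. dominating_L_coloring X E L g f"
proof -
  obtain c where c: "safe_color E L g v c" using exists_safe_color[OF fin v g L ne] by blast
  then obtain f where
    "dominating_L_coloring (X - {v}) E (reduce_lists E v c L) (reduce_precoloring E v c g) f"
    using reduced by blast
  then show ?thesis using dominating_L_coloring_extend[OF fin v loop g c] by blast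
qed

lemma dominating_L_coloring_if_slack:
  assumes "finite X" "\<And>x. {x, x} \<notin> E" "connected_graph X E" "r \<in> X"
    "infinite (L r) \<or> degree X E r < card (L r)"
    "degree_list_assignment X E L" "proper_partial_L_coloring X E L g"
  shows "\<exists>f. dominating_L_coloring X E L g f"
  using assms
proof (induction "card X" arbitrary: X L g rule: less_induct)
  case less
  note fin = less.prems(1) and loop = less.prems(2) and L = less.prems(6) and g = less.prems(7)
  show ?case
  proof (cases "X = {r}")
    case True
    have "L r \<noteq> {}" using less.prems(5) by auto
    then show ?thesis
    proof (rule dominating_L_coloring_peel[OF fin less.prems(4) loop L g])
      fix c
      have "proper_partial_L_coloring {} E (reduce_lists E r c L) (reduce_precoloring E r c g)"
        using proper_partial_L_coloring_reduce[OF g, of r c] True by simp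
      then show "\<exists>f. dominating_L_coloring (X - {r}) E (reduce_lists E r c L)
          (reduce_precoloring E r c g) f"
        using dominating_L_coloring_empty True by (metis Diff_cancel)
    qed
  next
    case False
    obtain z where z: "z \<in> X" "z \<noteq> r" "connected_graph (X - {z}) E"
      using connected_graph_delete_other_vertex[OF fin less.prems(3,4) False] .
    have "L z \<noteq> {}"
      using degree_list_assignment_nonempty[OF L z(1)]
        degree_pos_if_connected[OF fin less.prems(3) z(1) less.prems(4) z(2)] by blast
    then show ?thesis
    proof (rule dominating_L_coloring_peel[OF fin z(1) loop L g])
      fix c
      have "finite (X - {z})" "r \<in> X - {z}" using fin less.prems(4) z(2) by auto
      then show "\<exists>f. dominating_L_coloring (X - {z}) E (reduce_lists E z c L)
          (reduce_precoloring E z c g) f"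
        using less.hyps[OF card_Diff1_less[OF fin z(1)] _ loop z(3) _
            slack_reduce[where L = L, OF fin z(2)[symmetric] z(1) less.prems(5)]
            degree_list_assignment_reduce[OF fin z(1) L] proper_partial_L_coloring_reduce[OF g]]
        by blast
    qed
  qed
qed

lemma dominating_L_coloring_insert:
  assumes fin: "finite X" and loop: "\<And>x. {x, x} \<notin> E" and z: "z \<in> X" and c: "c \<in> L z"
    and h: "dominating_L_coloring (X - {z}) E L g h"
    and free: "\<And>y. y \<in> X \<Longrightarrow> {z, y} \<in> E \<Longrightarrow> h y \<noteq> c"
  shows "dominating_L_coloring X E L g (h(z := c))"
  unfolding dominating_L_coloring_def proper_L_coloring_def
proof (intro conjI ballI allI impI)
  show "(h(z := c)) x \<in> L x" if "x \<in> X" for x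
    using h that c unfolding dominating_L_coloring_def proper_L_coloring_def by auto
  fix x y assume xy: "{x, y} \<in> E \<and> x \<in> X \<and> y \<in> X"
  then have "x \<noteq> y" using loop by blast
  then show "(h(z := c)) x \<noteq> (h(z := c)) y"
    using h xy free[of x] free[of y] unfolding dominating_L_coloring_def proper_L_coloring_def
    by (auto simp: insert_commute)
next
  fix a
  have "card {x. g x = Some a} \<le> card {x \<in> X - {z}. h x = a}"
    using h unfolding dominating_L_coloring_def by blast
  also have "\<dots> \<le> card {x \<in> X. (h(z := c)) x = a}" using fin by (intro card_mono) auto
  finally show "card {x. g x = Some a} \<le> card {x \<in> X. (h(z := c)) x = a}" .
qed

lemma card_color_class_fun_upd:
  assumes "finite X" "z \<in> X" "u \<in> X" "z \<noteq> u"
  shows "card {x \<in> X - {u}. (h(z := h u)) x = a} = card {x \<in> X - {z}. h x = a}"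
proof (cases "h u = a")
  case True
  let ?S = "{x \<in> X - {z}. h x = a}"
  have "{x \<in> X - {u}. (h(z := h u)) x = a} = insert z (?S - {u})" using assms(2,4) True by auto
  moreover have "u \<in> ?S" "finite ?S" using assms True by auto
  moreover have "card (insert z (?S - {u})) = Suc (card (?S - {u}))"
    using \<open>finite ?S\<close> by (intro card_insert_disjoint) auto
  moreover have "Suc (card (?S - {u})) = card ?S" using card_Suc_Diff1 calculation(3,2) .
  ultimately show ?thesis by (simp only:)
next
  case False
  then have "{x \<in> X - {u}. (h(z := h u)) x = a} = {x \<in> X - {z}. h x = a}" using assms by auto
  then show ?thesis by simp
qed

lemma sum_card_edges_swap:
  assumes "finite A" "finite B"
  shows "(\<Sum>x\<in>A. card {y \<in> B. {x, y} \<in> E}) = (\<Sum>y\<in>B. card {x \<in> A. {y, x} \<in> E})"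
proof -
  have "(\<Sum>x\<in>A. card {y \<in> B. {x, y} \<in> E}) = card (SIGMA x:A. {y \<in> B. {x, y} \<in> E})"
    using assms by (simp add: card_SigmaI)
  also have "(SIGMA x:A. {y \<in> B. {x, y} \<in> E}) = prod.swap ` (SIGMA y:B. {x \<in> A. {y, x} \<in> E})"
    by (auto simp: insert_commute image_iff)
  also have "card \<dots> = card (SIGMA y:B. {x \<in> A. {y, x} \<in> E})"
    by (rule card_image) (simp add: swap_inj_on)
  also have "\<dots> = (\<Sum>y\<in>B. card {x \<in> A. {y, x} \<in> E})"
    using assms by (simp add: card_SigmaI)
  finally show ?thesis .
qed

lemma sum_plus_one_eq_double_card:
  assumes "finite A" "a \<in> A" "\<And>x. x \<in> A \<Longrightarrow> f x + (if x = a then 1 else 0) = (2::nat)"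
  shows "sum f A + 1 = 2 * card A"
proof -
  have "sum f A + 1 = (\<Sum>x\<in>A. f x + (if x = a then 1 else 0))"
    using assms(1,2) by (simp add: sum.distrib)
  also have "\<dots> = 2 * card A" using assms(3) by simp
  finally show ?thesis .
qed

section \<open>A minimal counterexample\<close>

locale no_dominating_coloring =
  fixes X :: "'a set" and E :: "'a set set" and L :: "'a \<Rightarrow> 'c set" and g :: "'a \<Rightarrow> 'c option"
  assumes finite: "finite X" and loopless: "\<And>x. {x, x} \<notin> E"
    and lists: "degree_list_assignment X E L" and precoloring: "proper_partial_L_coloring X E L g"
    and no_coloring: "\<And>f. \<not> dominating_L_coloring X E L g f"
begin

definition near_coloring :: "'a \<Rightarrow> ('a \<Rightarrow> 'c) \<Rightarrow> bool" where
  "near_coloring z h \<longleftrightarrow> z \<in> X \<and> dominating_L_coloring (X - {z}) E L g h"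

lemma exists_uncolored: "\<exists>z \<in> X. g z = None"
proof (rule ccontr)
  assume "\<not> ?thesis"
  then have total: "g x = Some (the (g x))" if "x \<in> X" for x using that by auto
  have "dominating_L_coloring X E L g (\<lambda>x. the (g x))"
    unfolding dominating_L_coloring_def proper_L_coloring_def
  proof (intro conjI ballI allI impI)
    show "the (g x) \<in> L x" if "x \<in> X" for x
      using proper_partial_L_coloringD(2)[OF precoloring total[OF that]] .
    fix x y assume "{x, y} \<in> E \<and> x \<in> X \<and> y \<in> X"
    then show "the (g x) \<noteq> the (g y)"
      using total proper_partial_L_coloringD(3)[OF precoloring, of x y] by (metis domI)
  next
    fix a
    have "{x. g x = Some a} \<subseteq> {x \<in> X. the (g x) = a}"
      using proper_partial_L_coloringD(1)[OF precoloring] by auto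
    then show "card {x. g x = Some a} \<le> card {x \<in> X. the (g x) = a}"
      using finite by (intro card_mono) auto
  qed
  then show False using no_coloring by blast
qed

lemma near_coloring_uses_all_colors:
  assumes "near_coloring z h" "c \<in> L z"
  shows "\<exists>y \<in> X. {z, y} \<in> E \<and> h y = c"
proof (rule ccontr)
  assume "\<not> ?thesis"
  then have "dominating_L_coloring X E L g (h(z := c))"
    using assms finite loopless unfolding near_coloring_def
    by (intro dominating_L_coloring_insert) auto
  then show False using no_coloring by blast
qed

lemma near_coloring_saturated:
  assumes h: "near_coloring z h"
  shows "L z = h ` {y \<in> X. {z, y} \<in> E}" "inj_on h {y \<in> X. {z, y} \<in> E}"
    "finite (L z)" "degree X E z = card (L z)"
proof -
  let ?N = "{y \<in> X. {z, y} \<in> E}"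
  have z: "z \<in> X" using h unfolding near_coloring_def by blast
  have sub: "L z \<subseteq> h ` ?N" using near_coloring_uses_all_colors[OF h] by blast
  have fN: "finite ?N" using finite by simp
  then show fL: "finite (L z)" using sub finite_surj by blast
  have "card ?N \<le> card (L z)"
    using lists z fL unfolding degree_list_assignment_def degree_def by auto
  moreover have "card (L z) \<le> card (h ` ?N)" using sub fN by (intro card_mono) auto
  moreover have "card (h ` ?N) \<le> card ?N" by (rule card_image_le[OF fN])
  ultimately have "card (h ` ?N) = card ?N" "card (L z) = card (h ` ?N)" "card ?N = card (L z)"
    by linarith+
  then show "inj_on h ?N" "L z = h ` ?N" "degree X E z = card (L z)"
    using eq_card_imp_inj_on[OF fN] card_subset_eq[OF _ sub] fN unfolding degree_def by auto
qed

lemma near_coloring_move: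
  assumes h: "near_coloring z h" and u: "u \<in> X" "{z, u} \<in> E"
  shows "near_coloring u (h(z := h u))"
proof -
  let ?N = "{y \<in> X. {z, y} \<in> E}"
  have z: "z \<in> X" and hz: "dominating_L_coloring (X - {z}) E L g h"
    using h unfolding near_coloring_def by auto
  have uz: "u \<noteq> z" using u loopless by blast
  have uN: "u \<in> ?N" using u by simp
  have inj: "inj_on h ?N" using near_coloring_saturated(2)[OF h] .
  have hu: "h u \<in> L z" using near_coloring_saturated(1)[OF h] uN by blast
  have nbr: "h y \<noteq> h u" if "y \<in> X" "{y, z} \<in> E \<or> {z, y} \<in> E" "y \<noteq> u" for y
    using inj_on_contraD[OF inj that(3)] that(1,2) uN by (auto simp: insert_commute)
  have "proper_L_coloring (X - {u}) E L (h(z := h u))"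
    unfolding proper_L_coloring_def
  proof (intro conjI allI ballI impI)
    show "(h(z := h u)) x \<in> L x" if "x \<in> X - {u}" for x
      using hz hu that unfolding dominating_L_coloring_def proper_L_coloring_def by auto
    fix x y assume xy: "{x, y} \<in> E \<and> x \<in> X - {u} \<and> y \<in> X - {u}"
    then have "x \<noteq> y" using loopless by blast
    show "(h(z := h u)) x \<noteq> (h(z := h u)) y"
    proof (cases "x = z \<or> y = z")
      case True
      then show ?thesis using nbr[of x] nbr[of y] xy \<open>x \<noteq> y\<close> by auto
    next
      case False
      then show ?thesis
        using hz xy unfolding dominating_L_coloring_def proper_L_coloring_def by auto
    qed
  qed
  moreover have "card {x. g x = Some a} \<le> card {x \<in> X - {u}. (h(z := h u)) x = a}" for a
    unfolding card_color_class_fun_upd[OF finite z u(1) uz[symmetric]]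
    using hz unfolding dominating_L_coloring_def by blast
  ultimately show ?thesis using u(1) unfolding near_coloring_def dominating_L_coloring_def by blast
qed

lemma near_coloring_walk:
  assumes "near_coloring z h" "(z, y) \<in> (adj E T)\<^sup>*" "T \<subseteq> X"
  shows "\<exists>h'. near_coloring y h' \<and> (\<forall>x. x \<notin> T \<longrightarrow> h' x = h x)"
  using assms(2)
proof (induction rule: rtrancl_induct)
  case (step y y')
  then obtain h1 where h1: "near_coloring y h1" "\<forall>x. x \<notin> T \<longrightarrow> h1 x = h x" by blast
  have "y \<in> T" "y' \<in> X" "{y, y'} \<in> E" using adjD[OF step(2)] assms(3) by auto
  then have "near_coloring y' (h1(y := h1 y'))" using near_coloring_move[OF h1(1)] by blast
  moreover have "\<forall>x. x \<notin> T \<longrightarrow> (h1(y := h1 y')) x = h x" using h1(2) \<open>y \<in> T\<close> by auto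
  ultimately show ?case by blast
qed (use assms(1) in blast)

lemma near_coloring_everywhere:
  assumes "connected_graph X E" "near_coloring z h" "y \<in> X"
  shows "\<exists>h'. near_coloring y h'"
  using near_coloring_walk[OF assms(2) connected_graphD[OF assms(1)] order_refl] assms(2,3)
  unfolding near_coloring_def by blast

lemma exists_near_coloring:
  assumes X: "nonseparable X E" and X2: "2 \<le> card X"
  shows "\<exists>z h. near_coloring z h"
proof -
  obtain z where z: "z \<in> X" "g z = None" using exists_uncolored by blast
  obtain z' where z': "z' \<in> X" "z' \<noteq> z" using obtain_other_if_two_le_card[OF finite X2] by blast
  obtain r where r: "r \<in> X" "{z, r} \<in> E"
    using connected_graph_has_neighbor[OF nonseparable_connected[OF X] z(1) z'(1)
        z'(2)[symmetric]] .
  have rz: "r \<noteq> z" using r(2) loopless by blast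
  have "connected_graph (X - {z}) E" using nonseparable_delete[OF X z(1)] r(1) rz by blast
  moreover have "infinite (L r) \<or> degree (X - {z}) E r < card (L r)"
    using lists r(1) degree_delete_vertex[OF finite rz, of E]
      degree_pos_if_edge[OF finite z(1), of r E] r(2) z(1) unfolding degree_list_assignment_def by (auto simp: insert_commute)
  ultimately obtain h where "dominating_L_coloring (X - {z}) E L g h"
    using dominating_L_coloring_if_slack[of "X - {z}" E r L g] finite loopless r(1) rz
      degree_list_assignment_delete[OF finite lists]
      proper_partial_L_coloring_delete_uncolored[OF precoloring z(2)] by blast
  then show ?thesis using z(1) unfolding near_coloring_def by blast
qed

lemma near_coloring_lists_mono:
  assumes X: "nonseparable X E" and h0: "near_coloring z0 h0"
    and vw: "v \<in> X" "w \<in> X" "{v, w} \<in> E"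
  shows "L v \<subseteq> L w"
proof
  fix c assume c: "c \<in> L v"
  obtain h where h: "near_coloring v h"
    using near_coloring_everywhere[OF nonseparable_connected[OF X] h0 vw(1)] by blast
  then obtain u where u: "u \<in> X" "{v, u} \<in> E" "h u = c"
    using near_coloring_uses_all_colors c by blast
  have wv: "w \<noteq> v" using vw(3) loopless by blast
  show "c \<in> L w"
  proof (cases "u = w")
    case True
    then have "h w = c" using u(3) by simp
    moreover have "h w \<in> L w"
      using h vw(2) wv unfolding near_coloring_def dominating_L_coloring_def proper_L_coloring_def
      by blast
    ultimately show ?thesis by simp
  next
    case False
    text \<open>Move the hole from u to w inside X - {v}, so that v keeps the colour c.\<close>
    have h1: "near_coloring u (h(v := c))" using near_coloring_move[OF h u(1,2)] u(3) by simp
    have uv: "u \<noteq> v" using u(2) loopless by blast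
    have "X - {v} \<noteq> {}" using u(1) uv by blast
    then have "connected_graph (X - {v}) E" using nonseparable_delete[OF X vw(1)] by blast
    moreover have "u \<in> X - {v}" "w \<in> X - {v}" using u(1) uv vw(2) wv by auto
    ultimately have "(u, w) \<in> (adj E (X - {v}))\<^sup>*" by (rule connected_graphD)
    then obtain h2 where h2: "near_coloring w h2" "\<forall>x. x \<notin> X - {v} \<longrightarrow> h2 x = (h(v := c)) x"
      using near_coloring_walk[OF h1] by blast
    have "v \<in> {y \<in> X. {w, y} \<in> E}" using vw by (simp add: insert_commute)
    then have "h2 v \<in> L w" using near_coloring_saturated(1)[OF h2(1)] by blast
    then show ?thesis using h2(2) by simp
  qed
qed

lemma near_coloring_lists_eq:
  assumes X: "nonseparable X E" and h0: "near_coloring z0 h0" and vw: "v \<in> X" "w \<in> X"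
  shows "L v = L w"
proof -
  have "(v, w) \<in> (adj E X)\<^sup>*" using connected_graphD[OF nonseparable_connected[OF X] vw] .
  then show ?thesis
  proof (induction rule: rtrancl_induct)
    case (step t t')
    then have "t \<in> X" "t' \<in> X" "{t, t'} \<in> E" "{t', t} \<in> E"
      using adjD[OF step(2)] by (auto simp: insert_commute)
    then show ?case using near_coloring_lists_mono[OF X h0] step(3) by blast
  qed simp
qed

text \<open>With two colours left, X - {z} splits into the colour classes A and B; every vertex has
  degree 2 except the two neighbours of z, one in each class. Counting the A-B edges from both
  sides gives |A| = |B|.\<close>

lemma near_coloring_odd:
  assumes h: "near_coloring z h" and same: "\<And>x. x \<in> X \<Longrightarrow> L x = L z"
    and deg2: "\<And>x. x \<in> X \<Longrightarrow> degree X E x = 2"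
  shows "odd (card X)"
proof -
  let ?N = "{y \<in> X. {z, y} \<in> E}" and ?Y = "X - {z}"
  let ?class = "\<lambda>c. {x \<in> ?Y. h x = h c}"
  have z: "z \<in> X" and hY: "dominating_L_coloring ?Y E L g h"
    using h unfolding near_coloring_def by auto
  have "card ?N = 2" using deg2[OF z] unfolding degree_def .
  then obtain a b where ab: "?N = {a, b}" "a \<noteq> b" by (meson card_2_iff)
  have hab: "h a \<noteq> h b"
    using inj_on_contraD[OF near_coloring_saturated(2)[OF h] ab(2)] ab(1) by blast
  have Lz: "L z = {h a, h b}" using near_coloring_saturated(1)[OF h] ab(1) by simp
  have two_colors: "h x = h a \<or> h x = h b" if "x \<in> ?Y" for x
    using hY that same Lz unfolding dominating_L_coloring_def proper_L_coloring_def by auto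
  have proper: "h x \<noteq> h y" if "x \<in> ?Y" "y \<in> ?Y" "{x, y} \<in> E" for x y
    using hY that unfolding dominating_L_coloring_def proper_L_coloring_def by blast
  have count: "(\<Sum>x\<in>?class c. card {y \<in> ?class d. {x, y} \<in> E}) + 1 = 2 * card (?class c)"
    if cd: "{c, d} = {a, b}" "c \<noteq> d" for c d
  proof (rule sum_plus_one_eq_double_card)
    show "finite (?class c)" using finite by simp
    have "c \<in> ?N" "d \<in> ?N" "h c \<noteq> h d" using ab cd hab by (auto simp: doubleton_eq_iff)
    then show "c \<in> ?class c" using loopless by auto
    fix x assume x: "x \<in> ?class c"
    have "h y = h d" if "y \<in> ?Y" "{x, y} \<in> E" for y
    proof -
      have "h y \<noteq> h c" using proper[of x y] x that by auto
      moreover have "h y = h c \<or> h y = h d"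
        using two_colors[OF that(1)] cd by (auto simp: doubleton_eq_iff)
      ultimately show ?thesis by blast
    qed
    then have "{y \<in> ?Y. {x, y} \<in> E} = {y \<in> ?class d. {x, y} \<in> E}" by auto
    moreover have "degree ?Y E x + (if x \<in> ?N then 1 else 0) = 2"
      using degree_delete_vertex[OF finite, of x z E] deg2[of x] x z
      by (auto simp: insert_commute)
    moreover have "x \<in> ?N \<longleftrightarrow> x = c" using x ab cd hab by (auto simp: doubleton_eq_iff)
    ultimately show "card {y \<in> ?class d. {x, y} \<in> E} + (if x = c then 1 else 0) = 2"
      unfolding degree_def by simp
  qed
  have "card (?class a) = card (?class b)"
    using count[of a b] count[of b a] ab(2) sum_card_edges_swap[of "?class a" "?class b" E] finite
    by (simp add: insert_commute)
  moreover have "card ?Y = card (?class a) + card (?class b)"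
  proof -
    have "card (?class a \<union> ?class b) = card (?class a) + card (?class b)"
      by (rule card_Un_disjoint) (use finite hab in auto)
    moreover have "?class a \<union> ?class b = ?Y" using two_colors by auto
    ultimately show ?thesis by metis
  qed
  moreover have "card X = card ?Y + 1" using card_Suc_Diff1[OF finite z] by simp
  ultimately show ?thesis by simp
qed

end

lemma dominating_L_coloring_if_minimal_non_gallai:
  assumes fin: "finite X" and loop: "\<And>x. {x, x} \<notin> E" and X: "non_gallai_subgraph X E X"
    and minimal: "\<And>W. non_gallai_subgraph X E W \<Longrightarrow> W = X"
    and L: "degree_list_assignment X E L" and g: "proper_partial_L_coloring X E L g"
  shows "\<exists>f. dominating_L_coloring X E L g f"
proof (rule ccontr)
  assume "\<nexists>f. dominating_L_coloring X E L g f"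
  then interpret no_dominating_coloring X E L g using fin loop L g by unfold_locales blast+
  have nsX: "nonseparable X E" and X3: "3 \<le> card X" and nclq: "\<not> is_clique X E"
    and ncyc: "\<not> is_odd_cycle X E"
    using X unfolding non_gallai_subgraph_def by auto
  have conn: "connected_graph X E" using nonseparable_connected[OF nsX] .
  obtain z h where h: "near_coloring z h" using exists_near_coloring[OF nsX] X3 by fastforce
  have z: "z \<in> X" using h unfolding near_coloring_def by blast
  have same: "L v = L z" if "v \<in> X" for v using near_coloring_lists_eq[OF nsX h that z] .
  have reg: "degree X E v = card (L z)" if "v \<in> X" for v
    using near_coloring_everywhere[OF conn h that] near_coloring_saturated(4) same[OF that] by metis
  have "2 \<le> card (L z)" using nonseparable_degree_ge_2[OF fin loop nsX X3 z] reg[OF z] by simp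
  show False
  proof (cases "card (L z) = 2")
    case True
    then have "odd (card X)" using near_coloring_odd[OF h same] reg by simp
    then have "is_odd_cycle X E" unfolding is_odd_cycle_def using conn X3 reg True by simp
    then show False using ncyc by contradiction
  next
    case False
    then obtain W where "non_gallai_subgraph X E W" "W \<noteq> X"
      using regular_nonseparable_has_non_gallai_part[OF fin loop nsX nclq reg]
        \<open>2 \<le> card (L z)\<close> by fastforce
    then show False using minimal by blast
  qed
qed

lemma dominating_L_coloring_if_non_gallai_subgraph:
  assumes "finite X" "\<And>x. {x, x} \<notin> E" "connected_graph X E" "non_gallai_subgraph X E W"
    "degree_list_assignment X E L" "proper_partial_L_coloring X E L g"
  shows "\<exists>f. dominating_L_coloring X E L g f"
  using assms
proof (induction "card X" arbitrary: X L g W rule: less_induct)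
  case less
  note fin = less.prems(1) and loop = less.prems(2) and conn = less.prems(3)
    and L = less.prems(5) and g = less.prems(6)
  show ?case
  proof (cases "\<exists>W'. non_gallai_subgraph X E W' \<and> W' \<noteq> X")
    case True
    then obtain W' where W': "non_gallai_subgraph X E W'" "W' \<noteq> X" by blast
    then have W'X: "W' \<subseteq> X" "connected_graph W' E" "3 \<le> card W'"
      unfolding non_gallai_subgraph_def using nonseparable_connected by auto
    obtain z where z: "z \<in> X - W'" "connected_graph (X - {z}) E"
      using connected_graph_delete_vertex_outside[OF fin conn W'X(1,2) W'(2)] by blast
    have zX: "z \<in> X" using z(1) by blast
    obtain w where "w \<in> W'" using W'X(3) by fastforce
    then have "L z \<noteq> {}"
      using degree_list_assignment_nonempty[OF L] degree_pos_if_connected[OF fin conn] z(1) W'X(1)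
      by blast
    then show ?thesis
    proof (rule dominating_L_coloring_peel[OF fin zX loop L g])
      fix c
      have "non_gallai_subgraph (X - {z}) E W'"
        using W'(1) z(1) unfolding non_gallai_subgraph_def by auto
      moreover have "card (X - {z}) < card X" using card_Diff1_less[OF fin] z(1) by blast
      ultimately show "\<exists>f. dominating_L_coloring (X - {z}) E (reduce_lists E z c L)
          (reduce_precoloring E z c g) f"
        using less.hyps[OF _ _ loop z(2) _ degree_list_assignment_reduce[OF fin _ L]
            proper_partial_L_coloring_reduce[OF g]] fin z(1) by blast
    qed
  next
    case False
    then have "non_gallai_subgraph X E X" using less.prems(4) by (metis non_gallai_subgraph_def)
    then show ?thesis
      using dominating_L_coloring_if_minimal_non_gallai[OF fin loop _ _ L g] False by blast
  qed
qed

theorem theorem1p14: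
  fixes V :: "'a set" and E :: "'a set set" and L :: "'a \<Rightarrow> 'c set"
    and g :: "'a \<Rightarrow> 'c option"
  assumes "graph V E"
    and "connected_graph V E"
    and "\<not> gallai_tree V E"
    and "degree_list_assignment V E L"
    and "proper_partial_L_coloring V E L g"
  shows "\<exists>f. proper_L_coloring V E L f \<and>
     (\<forall>\<alpha> \<in> (\<Union>x\<in>V. L x). card {x \<in> V. f x = \<alpha>} \<ge> card {x. g x = Some \<alpha>})"
proof -
  have fin: "finite V" using assms(1) unfolding graph_def by blast
  obtain W F where "block V E W F" "\<not> is_clique W F" "\<not> is_odd_cycle W F"
    using assms(2,3) unfolding gallai_tree_def by blast
  then have "non_gallai_subgraph V E W" using block_non_gallai_subgraph[OF assms(1)] by blast
  then obtain f where "dominating_L_coloring V E L g f"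
    using dominating_L_coloring_if_non_gallai_subgraph[OF fin graph_loopless[OF assms(1)] assms(2) _
        assms(4,5)] by blast
  then show ?thesis unfolding dominating_L_coloring_def by blast
qed

end
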